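(* Let $\mathfrak{g}$, $A$, $E$, $S$, $p_1,\dots,p_r$, $\widehat p_1,\dots,\widehat p_r$ be as in the context and let $h^\vee$ be the dual Coxeter number of $\mathfrak{g}$. Suppose there is a polynomial $f\in\mathbb{C}[u_1,\dots,u_r]$, homogeneous of degree $h^\vee$ for the grading $\deg u_i=d_i-1$, such that $f(\widehat p_1,\dots,\widehat p_r)=0$ in $E$ and the coefficient of $u_1^{h^\vee}$ in $f$ is nonzero. Then $S^{h^\vee}=0$ in $A$.
   Context: Let $\mathfrak{g}$ be a simple finite-dimensional complex Lie algebra with a fixed nondegenerate invariant symmetric bilinear form, used to identify $\mathfrak{g}$ with $\mathfrak{g}^*$. Let $n=\dim\mathfrak{g}$, let $e_1,\dots,e_n$ be an orthonormal basis with coordinates $z_1,\dots,z_n$. Let $R$ be the exterior algebra on odd generators $x_1,\dots,x_n,y_1,\dots,y_n$ ($R\cong\wedge(\mathfrak{g}\oplus\mathfrak{g})$), bigraded with $x_a$ in degree $(1,0)$, $y_a$ in degree $(0,1)$, with $\mathfrak{g}$ acting by derivations so that $(x_a)$, $(y_a)$ transform as coordinates of two copies of $\mathfrak{g}$. Put $X=\sum_a x_ae_a$, $Y=\sum_a y_ae_a$, and for $U=\sum u_ae_a$, $V=\sum v_ae_a$ with $u_a,v_a$ odd set $\{U,V\}=\sum_{a,b}u_av_b[e_a,e_b]$. Let $I\subset R$ be the ideal generated by the $e_c$-coefficients of $\{X,X\}$, $\{X,Y\}$, $\{Y,Y\}$, and $A=R/I$. Let $S$ be the image in $A$ of $\sum_a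 x_ay_a$ (proportional to $\mathrm{Tr}_V(XY)$ for a nontrivial irreducible representation $V$). Let $J\subset R$ be the ideal generated by the $e_c$-coefficients of $\{X,X\}$ and $\{Y,Y\}$, and $E=(R/J)^{\mathfrak{g}}$. For homogeneous $F\in(S\mathfrak{g})^{\mathfrak{g}}$ of degree $\ge2$ define $\widehat F=\sum_{a,b}\frac{\partial^2F}{\partial z_a\partial z_b}(\{X,Y\})\,x_ay_b\in E$, substituting for $z_c$ the $e_c$-coefficient of $\{X,Y\}$. Let $p_1,\dots,p_r$ be homogeneous algebraically independent generators of $(S\mathfrak{g})^{\mathfrak{g}}$ of degrees $d_1=2\le\dots\le d_r$ (so $p_1$ is the quadratic invariant). *)

theory Defs
  imports Complex_Main "HOL-Library.Poly_Mapping" "HOL-Library.Function_Algebras"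
begin

text \<open>g = C^n with basis e_0..e_(n-1), orthonormal for the fixed invariant form,
  and [e_a,e_b] = sum_k sc a b k e_k.  Invariance of the form means
  sc a b k = ([e_a,e_b],e_k) is totally antisymmetric.\<close>

definition lie_vecs :: "nat \<Rightarrow> (nat \<Rightarrow> complex) set" where
  "lie_vecs n = {v. \<forall>k\<ge>n. v k = 0}"

definition lie_br :: "nat \<Rightarrow> (nat \<Rightarrow> nat \<Rightarrow> nat \<Rightarrow> complex) \<Rightarrow>
    (nat \<Rightarrow> complex) \<Rightarrow> (nat \<Rightarrow> complex) \<Rightarrow> (nat \<Rightarrow> complex)" where
  "lie_br n sc v w = (\<lambda>k. if k < n then (\<Sum>a<n. \<Sum>b<n. v a * w b * sc a b k) else 0)"

definition lie_ideal :: "nat \<Rightarrow> (nat \<Rightarrow> nat \<Rightarrow> nat \<Rightarrow> complex) \<Rightarrow> (nat \<Rightarrow> complex) set \<Rightarrow> bool" where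
  "lie_ideal n sc V \<longleftrightarrow> V \<subseteq> lie_vecs n \<and> (\<lambda>_. 0) \<in> V \<and>
     (\<forall>v\<in>V. \<forall>w\<in>V. (\<lambda>k. v k + w k) \<in> V) \<and>
     (\<forall>t. \<forall>v\<in>V. (\<lambda>k. t * v k) \<in> V) \<and>
     (\<forall>v\<in>V. \<forall>w\<in>lie_vecs n. lie_br n sc w v \<in> V)"

text \<open>Simple complex Lie algebra with a nondegenerate invariant symmetric form,
  for which e_0..e_(n-1) is an orthonormal basis.\<close>
definition simple_lie_onb :: "nat \<Rightarrow> (nat \<Rightarrow> nat \<Rightarrow> nat \<Rightarrow> complex) \<Rightarrow> bool" where
  "simple_lie_onb n sc \<longleftrightarrow>
     (\<forall>a<n. \<forall>b<n. \<forall>k<n. sc a b k = - sc b a k) \<and>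
     (\<forall>a<n. \<forall>b<n. \<forall>d<n. \<forall>k<n.
        (\<Sum>m<n. sc a b m * sc m d k + sc b d m * sc m a k + sc d a m * sc m b k) = 0) \<and>
     (\<forall>a<n. \<forall>b<n. \<forall>k<n. sc a b k = sc b k a) \<and>
     (\<exists>a<n. \<exists>b<n. \<exists>k<n. sc a b k \<noteq> 0) \<and>
     (\<forall>V. lie_ideal n sc V \<longrightarrow> V = {\<lambda>_. 0} \<or> V = lie_vecs n)"

definition killing_sq :: "nat \<Rightarrow> (nat \<Rightarrow> nat \<Rightarrow> nat \<Rightarrow> complex) \<Rightarrow> (nat \<Rightarrow> complex) \<Rightarrow> complex" where
  "killing_sq n sc h = (\<Sum>b<n. \<Sum>d<n. (\<Sum>a<n. h a * sc a b d) * (\<Sum>a<n. h a * sc a d b))"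

text \<open>With the invariant form normalised so that long roots
  have squared length 2, the Killing form is 2 h^v times it; over all sl2-triples
  (h,e,f) the minimum positive value of the normalised (h,h) is 2 (attained by the
  coroot of a long root; in general it is twice the Dynkin index, a positive integer).
  Hence h^v is the least positive k with kappa(h,h) = 4k for some sl2-triple.\<close>
definition dual_coxeter :: "nat \<Rightarrow> (nat \<Rightarrow> nat \<Rightarrow> nat \<Rightarrow> complex) \<Rightarrow> nat" where
  "dual_coxeter n sc = (LEAST k::nat. 0 < k \<and>
     (\<exists>h\<in>lie_vecs n. \<exists>e\<in>lie_vecs n. \<exists>f\<in>lie_vecs n.
        lie_br n sc h e = (\<lambda>i. 2 * e i) \<and> lie_br n sc h f = (\<lambda>i. - 2 * f i) \<and>
        lie_br n sc e f = h \<and> killing_sq n sc h = of_nat (4 * k)))"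

type_synonym mpoly = "(nat \<Rightarrow>\<^sub>0 nat) \<Rightarrow>\<^sub>0 complex"

definition mp_var :: "nat \<Rightarrow> mpoly" where
  "mp_var i = Poly_Mapping.single (Poly_Mapping.single i 1) 1"

definition mp_const :: "complex \<Rightarrow> mpoly" where
  "mp_const a = Poly_Mapping.single 0 a"

definition mp_vars_below :: "nat \<Rightarrow> mpoly \<Rightarrow> bool" where
  "mp_vars_below N F \<longleftrightarrow> (\<forall>m\<in>Poly_Mapping.keys F. Poly_Mapping.keys m \<subseteq> {..<N})"

definition mp_homog :: "nat \<Rightarrow> mpoly \<Rightarrow> bool" where
  "mp_homog d F \<longleftrightarrow> (\<forall>m\<in>Poly_Mapping.keys F. (\<Sum>i\<in>Poly_Mapping.keys m. Poly_Mapping.lookup m i) = d)"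

definition mp_whomog :: "(nat \<Rightarrow> nat) \<Rightarrow> nat \<Rightarrow> mpoly \<Rightarrow> bool" where
  "mp_whomog w d F \<longleftrightarrow> (\<forall>m\<in>Poly_Mapping.keys F. (\<Sum>i\<in>Poly_Mapping.keys m. Poly_Mapping.lookup m i * w i) = d)"

definition mp_pderiv :: "nat \<Rightarrow> mpoly \<Rightarrow> mpoly" where
  "mp_pderiv i F = (\<Sum>m\<in>Poly_Mapping.keys F.
     if 0 < Poly_Mapping.lookup m i
     then Poly_Mapping.single (Poly_Mapping.update i (Poly_Mapping.lookup m i - 1) m)
            (of_nat (Poly_Mapping.lookup m i) * Poly_Mapping.lookup F m)
     else 0)"

definition mp_subst :: "mpoly \<Rightarrow> (nat \<Rightarrow> mpoly) \<Rightarrow> mpoly" where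
  "mp_subst G q = (\<Sum>m\<in>Poly_Mapping.keys G. mp_const (Poly_Mapping.lookup G m) * (\<Prod>i\<in>Poly_Mapping.keys m. q i ^ Poly_Mapping.lookup m i))"

text \<open>F in (S g)^g: F is a polynomial in z_0..z_(n-1), killed by the derivation
  z_a \<mapsto> sum_b sc c a b z_b for each c (the action of e_c).\<close>
definition inv_poly :: "nat \<Rightarrow> (nat \<Rightarrow> nat \<Rightarrow> nat \<Rightarrow> complex) \<Rightarrow> mpoly \<Rightarrow> bool" where
  "inv_poly n sc F \<longleftrightarrow> mp_vars_below n F \<and>
     (\<forall>c<n. (\<Sum>a<n. \<Sum>b<n. mp_const (sc c a b) * mp_var b * mp_pderiv a F) = 0)"

section \<open>The exterior algebra R on x_0..x_(n-1) (generator a), y_0..y_(n-1) (generator n+a)\<close>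

text \<open>An element is a coefficient function on finite sets of generators (monomials in
  increasing order).\<close>
type_synonym ext = "nat set \<Rightarrow> complex"

definition ext_sign :: "nat set \<Rightarrow> nat set \<Rightarrow> complex" where
  "ext_sign T U = (-1) ^ card {(i, j). i \<in> T \<and> j \<in> U \<and> j < i}"

definition emul :: "ext \<Rightarrow> ext \<Rightarrow> ext" where
  "emul u v = (\<lambda>S. if finite S then (\<Sum>T\<in>Pow S. ext_sign T (S - T) * u T * v (S - T)) else 0)"

definition eone :: ext where "eone = (\<lambda>S. if S = {} then 1 else 0)"

definition escale :: "complex \<Rightarrow> ext \<Rightarrow> ext" where "escale t u = (\<lambda>S. t * u S)"

definition epow :: "ext \<Rightarrow> nat \<Rightarrow> ext" where "epow u k = (emul u ^^ k) eone"

definition egen :: "nat \<Rightarrow> ext" where "egen i = (\<lambda>S. if S = {i} then 1 else 0)"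

definition ext_carrier :: "nat \<Rightarrow> ext set" where
  "ext_carrier n = {u. \<forall>S. u S \<noteq> 0 \<longrightarrow> S \<subseteq> {..<2*n}}"

definition xg :: "nat \<Rightarrow> ext" where "xg a = egen a"
definition yg :: "nat \<Rightarrow> nat \<Rightarrow> ext" where "yg n a = egen (n + a)"

inductive_set ext_ideal :: "nat \<Rightarrow> ext set \<Rightarrow> ext set" for n G where
  zero: "(\<lambda>_. 0) \<in> ext_ideal n G"
| gen: "g \<in> G \<Longrightarrow> r \<in> ext_carrier n \<Longrightarrow> s \<in> ext_carrier n \<Longrightarrow> emul (emul r g) s \<in> ext_ideal n G"
| add: "u \<in> ext_ideal n G \<Longrightarrow> v \<in> ext_ideal n G \<Longrightarrow> (\<lambda>S. u S + v S) \<in> ext_ideal n G"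

text \<open>e_k-coefficient of {U,V}\<close>
definition brc :: "nat \<Rightarrow> (nat \<Rightarrow> nat \<Rightarrow> nat \<Rightarrow> complex) \<Rightarrow> (nat \<Rightarrow> ext) \<Rightarrow> (nat \<Rightarrow> ext) \<Rightarrow> nat \<Rightarrow> ext" where
  "brc n sc U V k = (\<Sum>a<n. \<Sum>b<n. escale (sc a b k) (emul (U a) (V b)))"

definition ideal_I :: "nat \<Rightarrow> (nat \<Rightarrow> nat \<Rightarrow> nat \<Rightarrow> complex) \<Rightarrow> ext set" where
  "ideal_I n sc = ext_ideal n ((\<lambda>k. brc n sc xg xg k) ` {..<n} \<union> (\<lambda>k. brc n sc xg (yg n) k) ` {..<n}
                          \<union> (\<lambda>k. brc n sc (yg n) (yg n) k) ` {..<n})"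

definition ideal_J :: "nat \<Rightarrow> (nat \<Rightarrow> nat \<Rightarrow> nat \<Rightarrow> complex) \<Rightarrow> ext set" where
  "ideal_J n sc = ext_ideal n ((\<lambda>k. brc n sc xg xg k) ` {..<n} \<union> (\<lambda>k. brc n sc (yg n) (yg n) k) ` {..<n})"

text \<open>S = sum_a x_a y_a (representative in R)\<close>
definition Selt :: "nat \<Rightarrow> ext" where "Selt n = (\<Sum>a<n. emul (xg a) (yg n a))"

text \<open>evaluation of a polynomial at (commuting, even) elements w_i of R\<close>
definition ext_eval :: "mpoly \<Rightarrow> (nat \<Rightarrow> ext) \<Rightarrow> ext" where
  "ext_eval F w = (\<Sum>m\<in>Poly_Mapping.keys F. escale (Poly_Mapping.lookup F m)
      (foldr (\<lambda>i acc. emul (epow (w i) (Poly_Mapping.lookup m i)) acc) (sorted_list_of_set (Poly_Mapping.keys m)) eone))"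

text \<open>\<widehat>F (representative in R of the element of E)\<close>
definition hat :: "nat \<Rightarrow> (nat \<Rightarrow> nat \<Rightarrow> nat \<Rightarrow> complex) \<Rightarrow> mpoly \<Rightarrow> ext" where
  "hat n sc F = (\<Sum>a<n. \<Sum>b<n.
     emul (emul (ext_eval (mp_pderiv a (mp_pderiv b F)) (brc n sc xg (yg n))) (xg a)) (yg n b))"

end

theory Submission
  imports Defs "Jordan_Normal_Form.Spectral_Radius"
begin

text \<open>
  The polynomials \<open>p i\<close> are indexed from 0, so \<open>p 0\<close> is the quadratic invariant \<open>p\<^sub>1\<close> of the paper.

  By Schur's lemma an \<open>ad\<close>-invariant symmetric bilinear form on the simple Lie algebra is a
  multiple of the given one.  Applied to the Hessian of an invariant quadratic polynomial this
  shows that \<open>p 0 = \<mu>/2 \<Sum>\<^sub>a z\<^sub>a\<^sup>2\<close> with \<open>\<mu> \<noteq> 0\<close>, and, by algebraic independence, that no other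
  generator is quadratic.  Hence \<open>hat (p 0) = \<mu> S\<close>, while for \<open>d i \<ge> 3\<close> every term of
  \<open>hat (p i)\<close> contains a coefficient of \<open>{X,Y}\<close> and so lies in \<open>I\<close>.  Reducing
  \<open>f(hat p) \<in> J \<subseteq> I\<close> modulo \<open>I\<close>, only the monomial \<open>u\<^sub>1\<^bsup>h\<^esup>\<close> survives, which leaves
  \<open>c \<mu>\<^bsup>h\<^esup> S\<^bsup>h\<^esup> \<in> I\<close> with \<open>c \<noteq> 0\<close>.  Neither the value of the dual Coxeter number nor the fact
  that the \<open>p i\<close> generate all invariants is needed.
\<close>

alias lookup = Poly_Mapping.lookup
alias keys = Poly_Mapping.keys
alias single = Poly_Mapping.single

section \<open>The exterior algebra\<close>

lemma emul_infinite: "infinite S \<Longrightarrow> emul u v S = 0"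
  by (simp add: emul_def)

lemma emul_add_left: "emul (u + v) w = emul u w + emul v w"
  by (rule ext) (simp add: emul_def sum.distrib algebra_simps)

lemma emul_add_right: "emul w (u + v) = emul w u + emul w v"
  by (rule ext) (simp add: emul_def sum.distrib algebra_simps)

lemma emul_zero_left: "emul 0 w = 0"
  by (rule ext) (simp add: emul_def)

lemma emul_zero_right: "emul w 0 = 0"
  by (rule ext) (simp add: emul_def)

lemma emul_escale_left: "emul (escale c u) v = escale c (emul u v)"
  by (rule ext) (simp add: emul_def escale_def sum_distrib_left algebra_simps)

lemma emul_escale_right: "emul u (escale c v) = escale c (emul u v)"
  by (rule ext) (simp add: emul_def escale_def sum_distrib_left algebra_simps)

lemma escale_add: "escale c (u + v) = escale c u + escale c v"
  by (rule ext) (simp add: escale_def algebra_simps)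

lemma escale_zero: "escale c 0 = 0"
  by (rule ext) (simp add: escale_def)

lemma escale_zero_left: "escale 0 u = 0"
  by (rule ext) (simp add: escale_def)

lemma escale_escale: "escale c (escale c' u) = escale (c * c') u"
  by (rule ext) (simp add: escale_def)

lemma escale_one: "escale 1 u = u"
  by (rule ext) (simp add: escale_def)

lemma escale_sum: "escale c (\<Sum>a\<in>A. f a) = (\<Sum>a\<in>A. escale c (f a))"
  by (induction A rule: infinite_finite_induct)
    (simp_all only: not_False_eq_True sum.infinite sum.empty sum.insert escale_zero escale_add)

lemma ext_sign_empty_left [simp]: "ext_sign {} U = 1"
  by (simp add: ext_sign_def)

lemma ext_sign_empty_right [simp]: "ext_sign T {} = 1"
  by (simp add: ext_sign_def)

lemma ext_sign_union_left:
  assumes "finite A" "finite B" "finite C" "A \<inter> B = {}"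
  shows "ext_sign (A \<union> B) C = ext_sign A C * ext_sign B C"
proof -
  have split: "{(i, j). i \<in> A \<union> B \<and> j \<in> C \<and> j < i} =
      {(i, j). i \<in> A \<and> j \<in> C \<and> j < i} \<union> {(i, j). i \<in> B \<and> j \<in> C \<and> j < i}" by auto
  have "finite {(i, j). i \<in> A \<and> j \<in> C \<and> j < i}" "finite {(i, j). i \<in> B \<and> j \<in> C \<and> j < i}"
    by (rule finite_subset[of _ "A \<times> C"] finite_subset[of _ "B \<times> C"], use assms in auto)+
  then show ?thesis unfolding ext_sign_def split
    by (subst card_Un_disjoint) (use assms in \<open>auto simp: power_add\<close>)
qed

lemma ext_sign_union_right:
  assumes "finite A" "finite B" "finite C" "B \<inter> C = {}"
  shows "ext_sign A (B \<union> C) = ext_sign A B * ext_sign A C"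
proof -
  have split: "{(i, j). i \<in> A \<and> j \<in> B \<union> C \<and> j < i} =
      {(i, j). i \<in> A \<and> j \<in> B \<and> j < i} \<union> {(i, j). i \<in> A \<and> j \<in> C \<and> j < i}" by auto
  have "finite {(i, j). i \<in> A \<and> j \<in> B \<and> j < i}" "finite {(i, j). i \<in> A \<and> j \<in> C \<and> j < i}"
    by (rule finite_subset[of _ "A \<times> B"] finite_subset[of _ "A \<times> C"], use assms in auto)+
  then show ?thesis unfolding ext_sign_def split
    by (subst card_Un_disjoint) (use assms in \<open>auto simp: power_add\<close>)
qed

text \<open>Both sides are sums over pairs of nested subsets \<open>A \<subseteq> T \<subseteq> S\<close>, matched by
  \<open>(T, A) \<mapsto> (A, T - A)\<close>; the signs agree by bimultiplicativity of \<^const>\<open>ext_sign\<close>.\<close>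

lemma emul_assoc: "emul (emul u v) w = emul u (emul v w)"
proof (rule ext)
  fix S :: "nat set"
  show "emul (emul u v) w S = emul u (emul v w) S"
  proof (cases "finite S")
    case False then show ?thesis by (simp add: emul_def)
  next
    case fin: True
    define F1 where "F1 = (\<lambda>(T, A). ext_sign T (S - T) * ext_sign A (T - A) * u A * v (T - A) * w (S - T))"
    define F2 where "F2 = (\<lambda>(A, B). ext_sign A (S - A) * ext_sign B (S - A - B) * u A * v B * w (S - A - B))"
    have lhs: "emul (emul u v) w S = (\<Sum>p\<in>Sigma (Pow S) Pow. F1 p)"
    proof -
      have "emul (emul u v) w S = (\<Sum>T\<in>Pow S. \<Sum>A\<in>Pow T. F1 (T, A))"
        using fin by (auto simp: emul_def F1_def sum_distrib_left sum_distrib_right algebra_simps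
            intro!: sum.cong dest: finite_subset)
      also have "\<dots> = (\<Sum>p\<in>Sigma (Pow S) Pow. F1 p)"
        by (subst sum.Sigma) (use fin in \<open>auto dest: finite_subset\<close>)
      finally show ?thesis .
    qed
    have rhs: "emul u (emul v w) S = (\<Sum>p\<in>Sigma (Pow S) (\<lambda>A. Pow (S - A)). F2 p)"
    proof -
      have "emul u (emul v w) S = (\<Sum>A\<in>Pow S. \<Sum>B\<in>Pow (S - A). F2 (A, B))"
        using fin by (auto simp: emul_def F2_def sum_distrib_left sum_distrib_right algebra_simps
            intro!: sum.cong)
      also have "\<dots> = (\<Sum>p\<in>Sigma (Pow S) (\<lambda>A. Pow (S - A)). F2 p)"
        by (subst sum.Sigma) (use fin in \<open>auto dest: finite_subset\<close>)
      finally show ?thesis .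
    qed
    have "(\<Sum>p\<in>Sigma (Pow S) Pow. F1 p) = (\<Sum>p\<in>Sigma (Pow S) (\<lambda>A. Pow (S - A)). F2 p)"
    proof (rule sum.reindex_bij_witness[where j = "\<lambda>(T, A). (A, T - A)" and i = "\<lambda>(A, B). (A \<union> B, A)"])
      fix p assume "p \<in> Sigma (Pow S) Pow"
      then obtain T A where p: "p = (T, A)" "T \<subseteq> S" "A \<subseteq> T" by auto
      have fins: "finite T" "finite A" "finite (S - T)" "finite (T - A)"
        using p fin by (auto dest: finite_subset)
      have "ext_sign T (S - T) = ext_sign A (S - T) * ext_sign (T - A) (S - T)"
        using ext_sign_union_left[of A "T - A" "S - T"] fins p by (simp add: Un_absorb1)
      moreover have "ext_sign A (S - A) = ext_sign A (T - A) * ext_sign A (S - T)"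
      proof -
        have "S - A = (T - A) \<union> (S - T)" using p by auto
        then show ?thesis using ext_sign_union_right[of A "T - A" "S - T"] fins by auto
      qed
      moreover have "S - A - (T - A) = S - T" using p by auto
      ultimately show "F2 ((\<lambda>(T, A). (A, T - A)) p) = F1 p"
        using p by (simp add: F1_def F2_def algebra_simps)
      show "(\<lambda>(A, B). (A \<union> B, A)) ((\<lambda>(T, A). (A, T - A)) p) = p" using p by auto
      show "(\<lambda>(T, A). (A, T - A)) p \<in> Sigma (Pow S) (\<lambda>A. Pow (S - A))" using p by auto
    next
      fix q assume "q \<in> Sigma (Pow S) (\<lambda>A. Pow (S - A))"
      then obtain A B where q: "q = (A, B)" "A \<subseteq> S" "B \<subseteq> S - A" by auto
      show "(\<lambda>(T, A). (A, T - A)) ((\<lambda>(A, B). (A \<union> B, A)) q) = q" using q by auto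
      show "(\<lambda>(A, B). (A \<union> B, A)) q \<in> Sigma (Pow S) Pow" using q by auto
    qed
    then show ?thesis using lhs rhs by simp
  qed
qed

lemma ext_carrier_infinite: "u \<in> ext_carrier n \<Longrightarrow> infinite S \<Longrightarrow> u S = 0"
  unfolding ext_carrier_def using finite_subset by blast

lemma ext_carrier_emul:
  assumes "u \<in> ext_carrier n" "v \<in> ext_carrier n"
  shows "emul u v \<in> ext_carrier n"
  unfolding ext_carrier_def mem_Collect_eq
proof (intro allI impI)
  fix S assume nz: "emul u v S \<noteq> 0"
  then have "finite S" by (metis emul_infinite)
  then have "(\<Sum>T\<in>Pow S. ext_sign T (S - T) * u T * v (S - T)) \<noteq> 0" using nz by (simp add: emul_def)
  then obtain T where T: "T \<in> Pow S" "ext_sign T (S - T) * u T * v (S - T) \<noteq> 0"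
    using sum.not_neutral_contains_not_neutral by blast
  then have "T \<subseteq> {..<2*n}" "S - T \<subseteq> {..<2*n}" using assms unfolding ext_carrier_def by auto
  then show "S \<subseteq> {..<2*n}" using T by auto
qed

lemma ext_carrier_add:
  assumes "u \<in> ext_carrier n" "v \<in> ext_carrier n"
  shows "u + v \<in> ext_carrier n"
  unfolding ext_carrier_def mem_Collect_eq
proof (intro allI impI)
  fix S assume "(u + v) S \<noteq> 0"
  then have "u S \<noteq> 0 \<or> v S \<noteq> 0" by auto
  then show "S \<subseteq> {..<2*n}" using assms unfolding ext_carrier_def by auto
qed

lemma ext_carrier_zero: "0 \<in> ext_carrier n"
  unfolding ext_carrier_def by auto

lemma ext_carrier_escale: "u \<in> ext_carrier n \<Longrightarrow> escale c u \<in> ext_carrier n"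
  unfolding ext_carrier_def escale_def by auto

lemma ext_carrier_sum: "(\<And>a. a \<in> A \<Longrightarrow> f a \<in> ext_carrier n) \<Longrightarrow> (\<Sum>a\<in>A. f a) \<in> ext_carrier n"
  by (induction A rule: infinite_finite_induct)
    (auto simp: ext_carrier_zero ext_carrier_add simp del: plus_fun_apply)

lemma ext_carrier_eone: "eone \<in> ext_carrier n"
  unfolding ext_carrier_def eone_def by auto

lemma ext_carrier_xg: "a < n \<Longrightarrow> xg a \<in> ext_carrier n"
  unfolding ext_carrier_def xg_def egen_def by auto

lemma ext_carrier_yg: "a < n \<Longrightarrow> yg n a \<in> ext_carrier n"
  unfolding ext_carrier_def yg_def egen_def by auto

lemma emul_eone_left:
  assumes "u \<in> ext_carrier n"
  shows "emul eone u = u"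
proof (rule ext)
  fix S show "emul eone u S = u S"
  proof (cases "finite S")
    case True
    have "emul eone u S = (\<Sum>T\<in>Pow S. ext_sign T (S - T) * eone T * u (S - T))"
      using True by (simp add: emul_def)
    also have "\<dots> = (\<Sum>T\<in>Pow S. if T = {} then u (S - T) else 0)"
      by (intro sum.cong) (auto simp: eone_def)
    also have "\<dots> = u S" using True by (subst sum.delta) auto
    finally show ?thesis .
  next
    case False then show ?thesis using ext_carrier_infinite[OF assms] by (simp add: emul_def)
  qed
qed

lemma emul_eone_right:
  assumes "u \<in> ext_carrier n"
  shows "emul u eone = u"
proof (rule ext)
  fix S show "emul u eone S = u S"
  proof (cases "finite S")
    case True
    have "emul u eone S = (\<Sum>T\<in>Pow S. ext_sign T (S - T) * u T * eone (S - T))"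
      using True by (simp add: emul_def)
    also have "\<dots> = (\<Sum>T\<in>Pow S. if T = S then u T else 0)"
      by (intro sum.cong) (auto simp: eone_def)
    also have "\<dots> = u S" using True by (subst sum.delta) auto
    finally show ?thesis .
  next
    case False then show ?thesis using ext_carrier_infinite[OF assms] by (simp add: emul_def)
  qed
qed

lemma epow_0 [simp]: "epow u 0 = eone"
  by (simp add: epow_def)

lemma epow_Suc: "epow u (Suc k) = emul u (epow u k)"
  by (simp add: epow_def)

lemma ext_carrier_epow: "u \<in> ext_carrier n \<Longrightarrow> epow u k \<in> ext_carrier n"
  by (induction k) (auto simp: epow_Suc ext_carrier_eone ext_carrier_emul)

lemma epow_escale: "epow (escale c u) k = escale (c ^ k) (epow u k)"
  by (induction k)
    (auto simp: epow_Suc escale_one emul_escale_left emul_escale_right escale_escale mult.commute)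

lemma zero_in_ext_ideal: "0 \<in> ext_ideal n G"
  unfolding zero_fun_def by (rule ext_ideal.zero)

lemma ext_ideal_add: "u \<in> ext_ideal n G \<Longrightarrow> v \<in> ext_ideal n G \<Longrightarrow> u + v \<in> ext_ideal n G"
  unfolding plus_fun_def by (rule ext_ideal.add)

lemma ext_ideal_sum: "(\<And>a. a \<in> A \<Longrightarrow> f a \<in> ext_ideal n G) \<Longrightarrow> (\<Sum>a\<in>A. f a) \<in> ext_ideal n G"
  by (induction A rule: infinite_finite_induct)
    (auto simp: zero_in_ext_ideal ext_ideal_add simp del: plus_fun_apply)

lemma ext_ideal_escale: "u \<in> ext_ideal n G \<Longrightarrow> escale c u \<in> ext_ideal n G"
proof (induction rule: ext_ideal.induct)
  case zero then show ?case using ext_ideal.zero by (simp add: escale_def)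
next
  case (gen g r s)
  then show ?case using ext_ideal.gen[OF gen(1) ext_carrier_escale[OF gen(2)] gen(3), of c]
    by (simp add: emul_escale_left)
next
  case (add u v)
  then show ?case using ext_ideal_add[OF add(3,4)] escale_add[of c u v] by (simp add: plus_fun_def)
qed

lemma ext_ideal_escale_iff: "c \<noteq> 0 \<Longrightarrow> escale c u \<in> ext_ideal n G \<longleftrightarrow> u \<in> ext_ideal n G"
  using ext_ideal_escale[of "escale c u" n G "1 / c"] by (auto simp: escale_escale escale_one ext_ideal_escale)

lemma ext_ideal_diff:
  assumes "u \<in> ext_ideal n G" "v \<in> ext_ideal n G"
  shows "u - v \<in> ext_ideal n G"
proof -
  have "u - v = u + escale (- 1) v" by (rule ext) (simp add: escale_def)
  then show ?thesis using assms by (metis ext_ideal_add ext_ideal_escale)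
qed

lemma ext_ideal_emul_left: "u \<in> ext_ideal n G \<Longrightarrow> t \<in> ext_carrier n \<Longrightarrow> emul t u \<in> ext_ideal n G"
proof (induction rule: ext_ideal.induct)
  case zero then show ?case using ext_ideal.zero emul_zero_right[of t] unfolding zero_fun_def by simp
next
  case (gen g r s)
  then show ?case using ext_ideal.gen[OF gen(1) ext_carrier_emul[OF gen(4,2)] gen(3)]
    by (simp add: emul_assoc)
next
  case (add u v)
  then show ?case using ext_ideal_add[OF add(3,4)] emul_add_right[of t u v] by (simp add: plus_fun_def)
qed

lemma ext_ideal_emul_right: "u \<in> ext_ideal n G \<Longrightarrow> t \<in> ext_carrier n \<Longrightarrow> emul u t \<in> ext_ideal n G"
proof (induction rule: ext_ideal.induct)
  case zero then show ?case using ext_ideal.zero emul_zero_left[of t] unfolding zero_fun_def by simp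
next
  case (gen g r s)
  then show ?case using ext_ideal.gen[OF gen(1,2) ext_carrier_emul[OF gen(3,4)]]
    by (simp add: emul_assoc)
next
  case (add u v)
  then show ?case using ext_ideal_add[OF add(3,4)] emul_add_left[of u v t] by (simp add: plus_fun_def)
qed

lemma ext_ideal_generator: "g \<in> G \<Longrightarrow> g \<in> ext_carrier n \<Longrightarrow> g \<in> ext_ideal n G"
  using ext_ideal.gen[OF _ ext_carrier_eone ext_carrier_eone, of g G n]
  by (simp add: emul_eone_left emul_eone_right)

lemma ext_ideal_mono: "u \<in> ext_ideal n G \<Longrightarrow> G \<subseteq> G' \<Longrightarrow> u \<in> ext_ideal n G'"
  by (induction rule: ext_ideal.induct) (auto intro: ext_ideal.intros)

lemma ext_ideal_epow:
  "u \<in> ext_ideal n G \<Longrightarrow> u \<in> ext_carrier n \<Longrightarrow> 0 < k \<Longrightarrow> epow u k \<in> ext_ideal n G"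
  by (cases k) (auto simp: epow_Suc intro: ext_ideal_emul_right ext_carrier_epow)

lemma ideal_J_subset_ideal_I: "ideal_J n sc \<subseteq> ideal_I n sc"
  unfolding ideal_J_def ideal_I_def by (auto elim: ext_ideal_mono)

definition ext_eval_monom :: "(nat \<Rightarrow>\<^sub>0 nat) \<Rightarrow> (nat \<Rightarrow> ext) \<Rightarrow> ext" where
  "ext_eval_monom m w =
     foldr (\<lambda>i acc. emul (epow (w i) (lookup m i)) acc) (sorted_list_of_set (keys m)) eone"

lemma ext_eval_monomials: "ext_eval F w = (\<Sum>m\<in>keys F. escale (lookup F m) (ext_eval_monom m w))"
  by (simp add: ext_eval_def ext_eval_monom_def)

lemma ext_carrier_foldr_emul:
  "\<forall>i\<in>set xs. E i \<in> ext_carrier n \<Longrightarrow> foldr (\<lambda>i acc. emul (E i) acc) xs eone \<in> ext_carrier n"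
  by (induction xs) (auto simp: ext_carrier_eone ext_carrier_emul)

lemma ext_ideal_foldr_emul:
  "\<forall>i\<in>set xs. E i \<in> ext_carrier n \<Longrightarrow> \<exists>i\<in>set xs. E i \<in> ext_ideal n G \<Longrightarrow>
     foldr (\<lambda>i acc. emul (E i) acc) xs eone \<in> ext_ideal n G"
proof (induction xs)
  case (Cons x xs)
  show ?case
  proof (cases "E x \<in> ext_ideal n G")
    case True
    then show ?thesis using Cons.prems ext_carrier_foldr_emul[of xs E n]
      by (simp add: ext_ideal_emul_right)
  next
    case False
    then have "foldr (\<lambda>i acc. emul (E i) acc) xs eone \<in> ext_ideal n G" using Cons by auto
    then show ?thesis using Cons.prems by (simp add: ext_ideal_emul_left)
  qed
qed simp

lemma ext_carrier_ext_eval_monom: "\<forall>i. w i \<in> ext_carrier n \<Longrightarrow> ext_eval_monom m w \<in> ext_carrier n"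
  unfolding ext_eval_monom_def by (intro ext_carrier_foldr_emul) (auto simp: ext_carrier_epow)

lemma ext_carrier_ext_eval: "\<forall>i. w i \<in> ext_carrier n \<Longrightarrow> ext_eval F w \<in> ext_carrier n"
  unfolding ext_eval_monomials
  by (intro ext_carrier_sum ext_carrier_escale ext_carrier_ext_eval_monom)

lemma ext_ideal_ext_eval_monom:
  assumes "\<forall>i. w i \<in> ext_carrier n" "i \<in> keys m" "w i \<in> ext_ideal n G"
  shows "ext_eval_monom m w \<in> ext_ideal n G"
  unfolding ext_eval_monom_def
proof (intro ext_ideal_foldr_emul)
  show "\<forall>i\<in>set (sorted_list_of_set (keys m)). epow (w i) (lookup m i) \<in> ext_carrier n"
    using assms by (auto simp: ext_carrier_epow)
  have "epow (w i) (lookup m i) \<in> ext_ideal n G"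
    using assms by (intro ext_ideal_epow) (auto simp: in_keys_iff)
  then show "\<exists>i\<in>set (sorted_list_of_set (keys m)). epow (w i) (lookup m i) \<in> ext_ideal n G"
    using assms by auto
qed

lemma ext_ideal_ext_eval:
  assumes "\<forall>i. w i \<in> ext_carrier n" "\<forall>m\<in>keys F. \<exists>i\<in>keys m. w i \<in> ext_ideal n G"
  shows "ext_eval F w \<in> ext_ideal n G"
  unfolding ext_eval_monomials
proof (intro ext_ideal_sum ext_ideal_escale)
  fix m assume "m \<in> keys F"
  then obtain i where "i \<in> keys m" "w i \<in> ext_ideal n G" using assms(2) by blast
  then show "ext_eval_monom m w \<in> ext_ideal n G" by (rule ext_ideal_ext_eval_monom[OF assms(1)])
qed

lemma ext_eval_monom_power:
  "w i \<in> ext_carrier n \<Longrightarrow> ext_eval_monom (single i k) w = epow (w i) k"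
  by (auto simp: ext_eval_monom_def intro: emul_eone_right ext_carrier_epow)

lemma ext_eval_const: "keys F \<subseteq> {0} \<Longrightarrow> ext_eval F w = escale (lookup F 0) eone"
  by (cases "keys F = {}")
    (auto simp: ext_eval_def escale_zero_left in_keys_iff dest!: subset_singletonD)

lemma ext_ideal_ext_eval_leading_term:
  assumes w: "\<forall>i. w i \<in> ext_carrier n"
    and others: "\<forall>m\<in>keys F. m \<noteq> single i k \<longrightarrow> (\<exists>j\<in>keys m. w j \<in> ext_ideal n G)"
    and F: "ext_eval F w \<in> ext_ideal n G"
  shows "escale (lookup F (single i k)) (epow (w i) k) \<in> ext_ideal n G"
proof -
  let ?m = "single i k" and ?T = "\<lambda>m. escale (lookup F m) (ext_eval_monom m w)"
  have rest: "(\<Sum>m\<in>keys F - {?m}. ?T m) \<in> ext_ideal n G"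
  proof (intro ext_ideal_sum ext_ideal_escale)
    fix m assume "m \<in> keys F - {?m}"
    then obtain j where "j \<in> keys m" "w j \<in> ext_ideal n G" using others by blast
    then show "ext_eval_monom m w \<in> ext_ideal n G" by (rule ext_ideal_ext_eval_monom[OF w])
  qed
  show ?thesis
  proof (cases "?m \<in> keys F")
    case True
    then have "ext_eval F w = ?T ?m + (\<Sum>m\<in>keys F - {?m}. ?T m)"
      by (simp add: ext_eval_monomials sum.remove)
    then have "?T ?m = ext_eval F w - (\<Sum>m\<in>keys F - {?m}. ?T m)" by simp
    then have "?T ?m \<in> ext_ideal n G" using ext_ideal_diff[OF F rest] by simp
    then show ?thesis using ext_eval_monom_power[of w i n k] w by simp
  next
    case False
    then have "lookup F ?m = 0" by (simp add: in_keys_iff)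
    then show ?thesis by (simp only: escale_zero_left zero_in_ext_ideal)
  qed
qed

definition mdeg :: "(nat \<Rightarrow>\<^sub>0 nat) \<Rightarrow> nat" where
  "mdeg m = (\<Sum>i\<in>keys m. lookup m i)"

lemma mdeg_superset: "finite A \<Longrightarrow> keys m \<subseteq> A \<Longrightarrow> mdeg m = (\<Sum>i\<in>A. lookup m i)"
  unfolding mdeg_def by (rule sum.mono_neutral_left) (auto simp: in_keys_iff)

lemma mdeg_add: "mdeg (m + m') = mdeg m + mdeg m'"
proof -
  let ?A = "keys m \<union> keys m'"
  have "mdeg (m + m') = (\<Sum>i\<in>?A. lookup (m + m') i)"
    using keys_add[of m m'] by (intro mdeg_superset) auto
  also have "\<dots> = (\<Sum>i\<in>?A. lookup m i) + (\<Sum>i\<in>?A. lookup m' i)"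
    by (simp add: lookup_add sum.distrib)
  also have "\<dots> = mdeg m + mdeg m'"
    using mdeg_superset[of ?A m] mdeg_superset[of ?A m'] by simp
  finally show ?thesis .
qed

lemma mdeg_single [simp]: "mdeg (single i k) = k"
  by (simp add: mdeg_def)

lemma mdeg_eq_0_iff: "mdeg m = 0 \<longleftrightarrow> m = 0"
  by (auto simp: mdeg_def in_keys_iff intro: poly_mapping_eqI)

lemma mp_homog_keys: "mp_homog d F \<Longrightarrow> m \<in> keys F \<Longrightarrow> mdeg m = d"
  unfolding mp_homog_def mdeg_def by blast

lemma mp_vars_below_keys: "mp_vars_below N F \<Longrightarrow> m \<in> keys F \<Longrightarrow> i \<in> keys m \<Longrightarrow> i < N"
  unfolding mp_vars_below_def by blast

lemma update_decr_eq_iff: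
  fixes k m :: "nat \<Rightarrow>\<^sub>0 nat"
  shows "0 < lookup k i \<and> Poly_Mapping.update i (lookup k i - 1) k = m \<longleftrightarrow> k = m + single i 1"
proof
  assume "0 < lookup k i \<and> Poly_Mapping.update i (lookup k i - 1) k = m"
  then show "k = m + single i 1"
    by (auto intro!: poly_mapping_eqI simp: lookup_add lookup_update lookup_single when_def)
next
  assume "k = m + single i 1"
  then show "0 < lookup k i \<and> Poly_Mapping.update i (lookup k i - 1) k = m"
    by (auto intro!: poly_mapping_eqI simp: lookup_add lookup_update lookup_single when_def)
qed

lemma monom_split_var:
  fixes m :: "nat \<Rightarrow>\<^sub>0 nat"
  assumes "m \<noteq> 0"
  obtains a m' where "m = m' + single a 1"
proof -
  obtain a where "0 < lookup m a" using assms by (metis gr0I lookup_zero poly_mapping_eqI)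
  then show ?thesis using that update_decr_eq_iff by blast
qed

lemma mdeg_2_cases:
  assumes "mdeg m = 2"
  obtains a b where "m = single a 1 + single b 1"
proof -
  obtain a m' where m: "m = m' + single a 1"
    using assms monom_split_var[of m] by (force simp: mdeg_eq_0_iff[symmetric])
  then have "mdeg m' = 1" using assms by (simp add: mdeg_add)
  then obtain b m'' where m': "m' = m'' + single b 1"
    using monom_split_var[of m'] by (force simp: mdeg_eq_0_iff[symmetric])
  then have "m'' = 0" using \<open>mdeg m' = 1\<close> by (simp add: mdeg_add mdeg_eq_0_iff)
  then show ?thesis using that m m' by (simp add: add.commute)
qed

lemma lookup_mp_pderiv: "lookup (mp_pderiv i F) m = of_nat (lookup m i + 1) * lookup F (m + single i 1)"
proof -
  have "lookup (mp_pderiv i F) m =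
      (\<Sum>k\<in>keys F. if k = m + single i 1 then of_nat (lookup k i) * lookup F k else 0)"
    unfolding mp_pderiv_def lookup_sum
  proof (intro sum.cong refl)
    fix k
    show "lookup (if 0 < lookup k i
        then single (Poly_Mapping.update i (lookup k i - 1) k) (of_nat (lookup k i) * lookup F k)
        else 0) m = (if k = m + single i 1 then of_nat (lookup k i) * lookup F k else 0)"
      using update_decr_eq_iff[of k i m] by (auto simp: lookup_single when_def)
  qed
  also have "\<dots> = of_nat (lookup m i + 1) * lookup F (m + single i 1)"
    by (subst sum.delta) (auto simp: lookup_add in_keys_iff)
  finally show ?thesis .
qed

lemma keys_mp_pderiv: "m \<in> keys (mp_pderiv i F) \<Longrightarrow> m + single i 1 \<in> keys F"
  by (auto simp: in_keys_iff lookup_mp_pderiv)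

lemma mp_homog_pderiv: "mp_homog d F \<Longrightarrow> mp_homog (d - 1) (mp_pderiv i F)"
  unfolding mp_homog_def mdeg_def[symmetric]
  by (metis keys_mp_pderiv mdeg_add mdeg_single diff_add_inverse2)

lemma mp_vars_below_pderiv: "mp_vars_below N F \<Longrightarrow> mp_vars_below N (mp_pderiv i F)"
  unfolding mp_vars_below_def
  by (metis keys_mp_pderiv keys_add lookup_add in_keys_iff add_is_0 subset_iff)

lemma mp_whomog_key_other_var:
  assumes hom: "mp_whomog (\<lambda>i. d i - 1) h f" and d0: "d 0 = 2"
    and m: "m \<in> keys f" "m \<noteq> single 0 h"
  shows "\<exists>i\<in>keys m. i \<noteq> 0"
proof (rule ccontr)
  assume "\<not> (\<exists>i\<in>keys m. i \<noteq> 0)"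
  then have keys: "keys m \<subseteq> {0}" by auto
  have "h = (\<Sum>i\<in>keys m. lookup m i * (d i - 1))"
    using hom m unfolding mp_whomog_def by simp
  also have "\<dots> = (\<Sum>i\<in>{0}. lookup m i * (d i - 1))"
    using keys by (intro sum.mono_neutral_left) (auto simp: in_keys_iff)
  also have "\<dots> = lookup m 0" using d0 by simp
  finally have "lookup m 0 = h" ..
  moreover have "lookup m i = 0" if "i \<noteq> 0" for i
    using keys that by (auto simp: in_keys_iff)
  ultimately have "m = single 0 h"
    by (intro poly_mapping_eqI) (simp add: lookup_single when_def)
  then show False using m by simp
qed

lemma lookup_const_mult: "lookup (mp_const s * G) m = s * lookup G m"
  by (simp add: mp_const_def lookup_mult lookup_single when_mult)

lemma const_mult_var: "mp_const s * mp_var b = single (single b 1) s"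
  by (simp add: mp_const_def mp_var_def mult_single)

lemma lookup_single_mult_add:
  fixes k m :: "nat \<Rightarrow>\<^sub>0 nat" and G :: mpoly
  shows "lookup (single k s * G) (k + m) = s * lookup G m"
  by (simp add: lookup_mult lookup_single when_mult add_left_cancel)

lemma lookup_single_var_mult:
  fixes P :: mpoly
  shows "lookup (single (single j 1) s * P) (single b 1 + single e 1) =
     (if j = b then s * lookup P (single e 1) else if j = e then s * lookup P (single b 1) else 0)"
proof -
  consider "j = b" | "j \<noteq> b" "j = e" | "j \<noteq> b" "j \<noteq> e" by blast
  then show ?thesis
  proof cases
    case 3
    have "single b 1 + single e 1 \<noteq> single j 1 + q" for q :: "nat \<Rightarrow>\<^sub>0 nat"
    proof
      assume "single b 1 + single e 1 = single j 1 + q"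
      then have "lookup (single b 1 + single e 1) j = lookup (single j 1 + q) j" by simp
      then show False using 3 by (simp add: lookup_add lookup_single)
    qed
    then show ?thesis using 3 by (simp add: lookup_mult lookup_single when_mult)
  next
    case 2
    then show ?thesis
      by (simp only: add.commute[of "single b 1"] lookup_single_mult_add) simp
  qed (simp add: lookup_single_mult_add)
qed

definition hessian0 :: "mpoly \<Rightarrow> nat \<Rightarrow> nat \<Rightarrow> complex" where
  "hessian0 F a b = lookup (mp_pderiv a (mp_pderiv b F)) 0"

lemma hessian0_eq: "hessian0 F a b = of_nat (lookup (single a 1) b + 1) * lookup F (single a 1 + single b 1)"
  by (simp add: hessian0_def lookup_mp_pderiv)

lemma hessian0_sym: "hessian0 F a b = hessian0 F b a"
  by (simp add: hessian0_eq lookup_single when_def add.commute)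

lemma lookup_pderiv_single: "lookup (mp_pderiv a F) (single e 1) = hessian0 F a e"
proof -
  have "hessian0 F e a = lookup (mp_pderiv a F) (single e 1)"
    by (simp add: hessian0_def lookup_mp_pderiv)
  then show ?thesis using hessian0_sym[of F e a] by simp
qed

lemma sum_two_deltas:
  fixes f :: "nat \<Rightarrow> complex"
  assumes "b < n" "e < n"
  shows "(\<Sum>j<n. f j * (if j = b then x else if j = e then y else 0)) =
     f b * x + (if b \<noteq> e then f e * y else 0)"
proof -
  have "(\<Sum>j<n. f j * (if j = b then x else if j = e then y else 0)) =
     (\<Sum>j<n. (if j = b then f j * x else 0) + (if j = e then (if b \<noteq> e then f j * y else 0) else 0))"
    by (rule sum.cong) auto
  also have "\<dots> = f b * x + (if b \<noteq> e then f e * y else 0)"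
    using assms by (simp add: sum.distrib)
  finally show ?thesis .
qed

text \<open>Read off from the coefficient of \<open>z\<^sub>b z\<^sub>e\<close> in the defining identity of \<^const>\<open>inv_poly\<close>.\<close>

lemma inv_poly_hessian0_invariant:
  assumes inv: "inv_poly n sc F" and c: "c < n" and b: "b < n" and e: "e < n"
  shows "(\<Sum>a<n. sc c a b * hessian0 F a e) + (\<Sum>a<n. sc c a e * hessian0 F a b) = 0"
proof -
  have "(\<Sum>a<n. \<Sum>j<n. mp_const (sc c a j) * mp_var j * mp_pderiv a F) = 0"
    using inv c unfolding inv_poly_def by blast
  then have "0 = lookup (\<Sum>a<n. \<Sum>j<n. single (single j 1) (sc c a j) * mp_pderiv a F) (single b 1 + single e 1)"
    by (simp add: const_mult_var)
  also have "\<dots> = (\<Sum>a<n. \<Sum>j<n. sc c a j *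
      (if j = b then hessian0 F a e else if j = e then hessian0 F a b else 0))"
    unfolding lookup_sum by (intro sum.cong refl)
      (simp only: lookup_single_var_mult lookup_pderiv_single, simp)
  also have "\<dots> = (\<Sum>a<n. sc c a b * hessian0 F a e + (if b \<noteq> e then sc c a e * hessian0 F a b else 0))"
    using sum_two_deltas[OF b e] by simp
  also have "\<dots> = (\<Sum>a<n. sc c a b * hessian0 F a e) +
      (if b \<noteq> e then (\<Sum>a<n. sc c a e * hessian0 F a b) else 0)"
    by (cases "b = e") (simp_all add: sum.distrib)
  finally have "(\<Sum>a<n. sc c a b * hessian0 F a e) +
      (if b \<noteq> e then (\<Sum>a<n. sc c a e * hessian0 F a b) else 0) = 0" ..
  then show ?thesis by (cases "b = e") auto
qed

section \<open>Schur's lemma\<close>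

lemma simple_lie_onb_antisym:
  assumes "simple_lie_onb n sc" "a < n" "b < n" "k < n"
  shows "sc a b k = - sc b a k"
proof -
  have "\<forall>a<n. \<forall>b<n. \<forall>k<n. sc a b k = - sc b a k"
    using assms(1) unfolding simple_lie_onb_def by (elim conjE) assumption
  then show ?thesis using assms(2-4) by blast
qed

lemma simple_lie_onb_cyclic:
  assumes "simple_lie_onb n sc" "a < n" "b < n" "k < n"
  shows "sc a b k = sc b k a"
proof -
  have "\<forall>a<n. \<forall>b<n. \<forall>k<n. sc a b k = sc b k a"
    using assms(1) unfolding simple_lie_onb_def by (elim conjE) assumption
  then show ?thesis using assms(2-4) by blast
qed

lemma simple_lie_onb_pos:
  assumes "simple_lie_onb n sc"
  shows "0 < n"
proof -
  have "\<exists>a<n. \<exists>b<n. \<exists>k<n. sc a b k \<noteq> 0"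
    using assms unfolding simple_lie_onb_def by (elim conjE) assumption
  then show ?thesis by auto
qed

lemma simple_lie_onb_ideal:
  assumes "simple_lie_onb n sc" "lie_ideal n sc V"
  shows "V = {\<lambda>_. 0} \<or> V = lie_vecs n"
proof -
  have "\<forall>V. lie_ideal n sc V \<longrightarrow> V = {\<lambda>_. 0} \<or> V = lie_vecs n"
    using assms(1) unfolding simple_lie_onb_def by (elim conjE) assumption
  then show ?thesis using assms(2) by blast
qed

lemma simple_lie_onb_antisym_right:
  assumes "simple_lie_onb n sc" "a < n" "b < n" "j < n"
  shows "sc a b j = - sc a j b"
  using simple_lie_onb_cyclic[OF assms(1)] simple_lie_onb_antisym[OF assms(1)] assms(2-) by metis

text \<open>The matrix of \<open>ad e\<^sub>a\<close> has entries \<open>sc a b j\<close> (row \<open>j\<close>, column \<open>b\<close>), so the hypothesis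
  below says that \<open>Q\<close> commutes with every \<open>ad e\<^sub>a\<close>.\<close>

lemma eigenspace_lie_ideal:
  assumes comm: "\<And>a b k. a < n \<Longrightarrow> b < n \<Longrightarrow> k < n \<Longrightarrow> (\<Sum>j<n. Q k j * sc a b j) = (\<Sum>j<n. sc a j k * Q j b)"
  shows "lie_ideal n sc {w \<in> lie_vecs n. \<forall>k<n. (\<Sum>j<n. Q k j * w j) = \<mu> * w k}"
    (is "lie_ideal n sc ?V")
  unfolding lie_ideal_def
proof (intro conjI ballI allI)
  show "?V \<subseteq> lie_vecs n" "(\<lambda>_. 0) \<in> ?V" by (auto simp: lie_vecs_def)
next
  fix w u assume "w \<in> ?V" "u \<in> ?V"
  then show "(\<lambda>k. w k + u k) \<in> ?V"
    by (auto simp: lie_vecs_def distrib_left sum.distrib)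
next
  fix t w assume w: "w \<in> ?V"
  have eigen: "(\<Sum>j<n. Q k j * (t * w j)) = \<mu> * (t * w k)" if "k < n" for k
  proof -
    have "(\<Sum>j<n. Q k j * (t * w j)) = t * (\<Sum>j<n. Q k j * w j)"
      by (simp add: sum_distrib_left mult.left_commute)
    also have "\<dots> = \<mu> * (t * w k)" using w that by simp
    finally show ?thesis .
  qed
  have "(\<lambda>k. t * w k) \<in> lie_vecs n" using w by (simp add: lie_vecs_def)
  with eigen show "(\<lambda>k. t * w k) \<in> ?V" by blast
next
  fix w u assume w: "w \<in> ?V" and "u \<in> lie_vecs n"
  have "(\<Sum>j<n. Q k j * lie_br n sc u w j) = \<mu> * lie_br n sc u w k" if k: "k < n" for k
  proof -
    have "(\<Sum>j<n. Q k j * lie_br n sc u w j) = (\<Sum>j<n. \<Sum>a<n. \<Sum>b<n. u a * (w b * (Q k j * sc a b j)))"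
      by (simp add: lie_br_def sum_distrib_left mult_ac)
    also have "\<dots> = (\<Sum>a<n. \<Sum>b<n. \<Sum>j<n. u a * (w b * (Q k j * sc a b j)))"
      by (subst sum.swap) (rule sum.cong[OF refl], rule sum.swap)
    also have "\<dots> = (\<Sum>a<n. u a * (\<Sum>b<n. w b * (\<Sum>j<n. Q k j * sc a b j)))"
      by (simp add: sum_distrib_left)
    also have "\<dots> = (\<Sum>a<n. u a * (\<Sum>b<n. w b * (\<Sum>j<n. sc a j k * Q j b)))"
      using comm k by simp
    also have "\<dots> = (\<Sum>a<n. \<Sum>j<n. \<Sum>b<n. u a * (w b * (sc a j k * Q j b)))"
      by (simp add: sum_distrib_left) (rule sum.cong[OF refl], rule sum.swap)
    also have "\<dots> = (\<Sum>a<n. u a * (\<Sum>j<n. sc a j k * (\<Sum>b<n. Q j b * w b)))"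
      by (simp add: sum_distrib_left mult_ac)
    also have "\<dots> = \<mu> * lie_br n sc u w k"
      using w k by (simp add: lie_br_def sum_distrib_left mult_ac)
    finally show ?thesis .
  qed
  then show "lie_br n sc u w \<in> ?V" by (simp add: lie_br_def lie_vecs_def)
qed

lemma exists_eigenvector:
  fixes Q :: "nat \<Rightarrow> nat \<Rightarrow> complex"
  assumes "0 < n"
  obtains \<mu> w where "w \<in> lie_vecs n" "w \<noteq> (\<lambda>_. 0)" "\<forall>k<n. (\<Sum>j<n. Q k j * w j) = \<mu> * w k"
proof -
  define M where "M = mat n n (\<lambda>(i, j). Q i j)"
  have M: "M \<in> carrier_mat n n" by (simp add: M_def)
  obtain \<mu> where "\<mu> \<in> spectrum M" using spectrum_non_empty[OF M assms] by auto
  then obtain v where v: "v \<in> carrier_vec n" "v \<noteq> 0\<^sub>v n" "M *\<^sub>v v = \<mu> \<cdot>\<^sub>v v"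
    unfolding spectrum_def eigenvalue_def eigenvector_def using M by auto
  define w where "w = (\<lambda>k. if k < n then v $ k else 0)"
  have "w \<noteq> (\<lambda>_. 0)"
  proof
    assume "w = (\<lambda>_. 0)"
    then have "v = 0\<^sub>v n" using v(1) by (intro eq_vecI) (auto simp: w_def fun_eq_iff, metis)
    then show False using v(2) by simp
  qed
  moreover have "(\<Sum>j<n. Q k j * w j) = \<mu> * w k" if "k < n" for k
  proof -
    have "(\<Sum>j<n. Q k j * w j) = (M *\<^sub>v v) $ k"
      using that v(1) by (simp add: M_def w_def scalar_prod_def lessThan_atLeast0)
    then show ?thesis using v(3) that v(1) by (simp add: w_def)
  qed
  moreover have "w \<in> lie_vecs n" by (simp add: w_def lie_vecs_def)
  ultimately show ?thesis using that by blast
qed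

lemma schur_lemma:
  assumes g: "simple_lie_onb n sc"
    and comm: "\<And>a b k. a < n \<Longrightarrow> b < n \<Longrightarrow> k < n \<Longrightarrow> (\<Sum>j<n. Q k j * sc a b j) = (\<Sum>j<n. sc a j k * Q j b)"
  obtains \<mu> where "\<forall>a<n. \<forall>b<n. Q a b = (if a = b then \<mu> else 0)"
proof -
  obtain \<mu> w where w: "w \<in> lie_vecs n" "w \<noteq> (\<lambda>_. 0)" "\<forall>k<n. (\<Sum>j<n. Q k j * w j) = \<mu> * w k"
    by (rule exists_eigenvector[OF simple_lie_onb_pos[OF g]])
  let ?V = "{w \<in> lie_vecs n. \<forall>k<n. (\<Sum>j<n. Q k j * w j) = \<mu> * w k}"
  have "w \<in> ?V" using w by simp
  then have "?V \<noteq> {\<lambda>_. 0}" using w(2) by auto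
  moreover have "?V = {\<lambda>_. 0} \<or> ?V = lie_vecs n"
    by (rule simple_lie_onb_ideal[OF g]) (rule eigenspace_lie_ideal, rule comm)
  ultimately have "?V = lie_vecs n" by (simp only: simp_thms)
  have "Q a b = (if a = b then \<mu> else 0)" if "a < n" "b < n" for a b
  proof -
    have "(\<lambda>k. if k = b then 1 else 0) \<in> ?V"
      using that \<open>?V = lie_vecs n\<close> by (auto simp: lie_vecs_def)
    then have "(\<Sum>j<n. Q a j * (if j = b then 1 else 0)) = \<mu> * (if a = b then 1 else 0)"
      using that(1) by simp
    moreover have "(\<Sum>j<n. Q a j * (if j = b then 1 else 0)) = Q a b"
      using that by (simp add: if_distrib[of "\<lambda>x. Q a _ * x"] cong: if_cong)
    ultimately show ?thesis by simp
  qed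
  then show ?thesis using that by blast
qed

lemma inv_poly_hessian0_scalar:
  assumes g: "simple_lie_onb n sc" and inv: "inv_poly n sc F"
  obtains \<mu> where "\<forall>a<n. \<forall>b<n. hessian0 F a b = (if a = b then \<mu> else 0)"
proof -
  have comm: "(\<Sum>j<n. hessian0 F k j * sc a b j) = (\<Sum>j<n. sc a j k * hessian0 F j b)"
    if abk: "a < n" "b < n" "k < n" for a b k
  proof -
    have "(\<Sum>j<n. hessian0 F k j * sc a b j) = - (\<Sum>j<n. sc a j b * hessian0 F j k)"
      unfolding sum_negf[symmetric]
      by (rule sum.cong[OF refl]) (simp add: simple_lie_onb_antisym_right[OF g abk(1,2)] hessian0_sym[of F k])
    also have "\<dots> = (\<Sum>j<n. sc a j k * hessian0 F j b)"
      using inv_poly_hessian0_invariant[OF inv abk] by (metis add_eq_0_iff)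
    finally show ?thesis .
  qed
  show ?thesis using comm by (rule schur_lemma[OF g]) (assumption+, rule that)
qed

section \<open>Quadratic invariants\<close>

lemma quadratic_coeff:
  assumes hom: "mp_homog 2 F" and vars: "mp_vars_below n F"
    and H: "\<forall>a<n. \<forall>b<n. hessian0 F a b = (if a = b then \<mu> else 0)"
  shows "lookup F m = (if \<exists>c<n. m = single c 1 + single c 1 then \<mu> / 2 else 0)"
proof (cases "m \<in> keys F")
  case True
  then obtain a b where m: "m = single a 1 + single b 1"
    using mdeg_2_cases mp_homog_keys[OF hom] by metis
  have ab: "a < n" "b < n"
    using mp_vars_below_keys[OF vars True] m by (auto simp: in_keys_iff lookup_add)
  have "hessian0 F a b = of_nat (lookup (single a 1) b + 1) * lookup F m"
    using hessian0_eq m by simp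
  then show ?thesis
    using H ab m True by (cases "a = b") (auto simp: lookup_single in_keys_iff)
next
  case False
  then have z: "lookup F m = 0" by (simp add: in_keys_iff)
  show ?thesis
  proof (cases "\<exists>c<n. m = single c 1 + single c 1")
    case True
    then obtain c where c: "c < n" "m = single c 1 + single c 1" by blast
    then have "hessian0 F c c = 2 * lookup F m" by (simp add: hessian0_eq)
    then have "\<mu> = 0" using H c z by simp
    then show ?thesis using z by simp
  qed (use z in auto)
qed

lemma quadratic_hessian0_nonzero:
  assumes "mp_homog 2 F" "mp_vars_below n F" "F \<noteq> 0"
    and "\<forall>a<n. \<forall>b<n. hessian0 F a b = (if a = b then \<mu> else 0)"
  shows "\<mu> \<noteq> 0"
proof
  assume "\<mu> = 0"
  then have "F = 0"
    using quadratic_coeff[OF assms(1,2,4)] by (intro poly_mapping_eqI) simp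
  then show False using assms(3) by simp
qed

text \<open>Schur's lemma makes the quadratic invariants one-dimensional.\<close>

lemma quadratic_generator_unique:
  fixes p :: "nat \<Rightarrow> mpoly"
  assumes g: "simple_lie_onb n sc"
    and p_inv: "\<forall>i<r. inv_poly n sc (p i) \<and> mp_homog (d i) (p i) \<and> p i \<noteq> 0"
    and p_indep: "\<forall>G. mp_vars_below r G \<and> mp_subst G p = 0 \<longrightarrow> G = 0"
    and ij: "i < r" "j < r" "i \<noteq> j" and d: "d i = 2" "d j = 2"
  shows False
proof -
  have inv: "inv_poly n sc (p i)" "inv_poly n sc (p j)"
    and hom: "mp_homog 2 (p i)" "mp_homog 2 (p j)"
    and vars: "mp_vars_below n (p i)" "mp_vars_below n (p j)"
    and nz: "p i \<noteq> 0" "p j \<noteq> 0"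
    using p_inv ij d by (auto simp: inv_poly_def)
  obtain \<mu>i where Hi: "\<forall>a<n. \<forall>b<n. hessian0 (p i) a b = (if a = b then \<mu>i else 0)"
    using inv_poly_hessian0_scalar[OF g inv(1)] by blast
  obtain \<mu>j where Hj: "\<forall>a<n. \<forall>b<n. hessian0 (p j) a b = (if a = b then \<mu>j else 0)"
    using inv_poly_hessian0_scalar[OF g inv(2)] by blast
  have "\<mu>i \<noteq> 0" "\<mu>j \<noteq> 0"
    using quadratic_hessian0_nonzero[OF hom(1) vars(1) nz(1) Hi]
      quadratic_hessian0_nonzero[OF hom(2) vars(2) nz(2) Hj] by blast+
  define c where "c = \<mu>j / \<mu>i"
  have proportional: "lookup (p j) m = c * lookup (p i) m" for m
    using quadratic_coeff[OF hom(1) vars(1) Hi, of m] quadratic_coeff[OF hom(2) vars(2) Hj, of m] \<open>\<mu>i \<noteq> 0\<close>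
    by (auto simp: c_def)
  define G :: mpoly where "G = single (single j 1) 1 + single (single i 1) (- c)"
  have neq: "single j 1 \<noteq> (single i 1 :: nat \<Rightarrow>\<^sub>0 nat)"
    using ij by (simp add: poly_mapping_eq_iff fun_eq_iff lookup_single when_def) metis
  have G: "lookup G (single j 1) = 1" "keys G = {single j 1, single i 1}"
    using neq \<open>\<mu>i \<noteq> 0\<close> \<open>\<mu>j \<noteq> 0\<close>
    by (auto simp: G_def c_def lookup_add lookup_single in_keys_iff when_def split: if_splits)
  have "mp_subst G p = mp_const 1 * p j + mp_const (- c) * p i"
    unfolding mp_subst_def G(2) using neq by (simp add: G_def lookup_add lookup_single)
  also have "\<dots> = 0"
    by (simp add: poly_mapping_eq_iff fun_eq_iff lookup_add lookup_const_mult proportional)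
  finally have "G = 0"
    using p_indep ij by (auto simp: mp_vars_below_def G(2))
  then show False using G(1) by simp
qed

lemma ext_carrier_brc_xy: "brc n sc xg (yg n) k \<in> ext_carrier n"
  unfolding brc_def
  by (intro ext_carrier_sum ext_carrier_escale ext_carrier_emul) (auto simp: ext_carrier_xg ext_carrier_yg)

lemma brc_xy_in_ideal_I: "k < n \<Longrightarrow> brc n sc xg (yg n) k \<in> ideal_I n sc"
  unfolding ideal_I_def by (rule ext_ideal_generator) (auto simp: ext_carrier_brc_xy)

lemma ext_carrier_hat: "hat n sc F \<in> ext_carrier n"
  unfolding hat_def
  by (intro ext_carrier_sum ext_carrier_emul ext_carrier_ext_eval)
    (auto simp: ext_carrier_brc_xy ext_carrier_xg ext_carrier_yg)

text \<open>For \<open>deg F \<ge> 3\<close> each second derivative of \<open>F\<close> has no constant term, so each of its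
  monomials, evaluated at \<open>{X,Y}\<close>, contains a generator of \<open>I\<close>.\<close>

lemma hat_in_ideal_I:
  assumes hom: "mp_homog d F" and d: "3 \<le> d" and vars: "mp_vars_below n F"
  shows "hat n sc F \<in> ideal_I n sc"
proof -
  obtain G where I: "ideal_I n sc = ext_ideal n G" by (simp add: ideal_I_def)
  show ?thesis
    unfolding hat_def I
  proof (intro ext_ideal_sum ext_ideal_emul_right)
    fix a b assume ab: "a \<in> {..<n}" "b \<in> {..<n}"
    then show "xg a \<in> ext_carrier n" "yg n b \<in> ext_carrier n"
      by (simp_all add: ext_carrier_xg ext_carrier_yg)
    let ?P = "mp_pderiv a (mp_pderiv b F)"
    have hom2: "mp_homog (d - 1 - 1) ?P" and vars2: "mp_vars_below n ?P"
      by (intro mp_homog_pderiv mp_vars_below_pderiv hom vars)+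
    have "\<exists>i\<in>keys m. brc n sc xg (yg n) i \<in> ext_ideal n G" if m: "m \<in> keys ?P" for m
    proof -
      have "m \<noteq> 0" using mp_homog_keys[OF hom2 m] d by (auto simp: mdeg_def)
      then have "keys m \<noteq> {}" by simp
      then obtain i where i: "i \<in> keys m" by (meson ex_in_conv)
      then have "i < n" by (rule mp_vars_below_keys[OF vars2 m])
      then have "brc n sc xg (yg n) i \<in> ext_ideal n G"
        using brc_xy_in_ideal_I[of i n sc] I by simp
      with i show ?thesis ..
    qed
    then show "ext_eval ?P (brc n sc xg (yg n)) \<in> ext_ideal n G"
      by (intro ext_ideal_ext_eval) (auto simp: ext_carrier_brc_xy)
  qed
qed

lemma hat_quadratic:
  assumes hom: "mp_homog 2 F"
    and H: "\<forall>a<n. \<forall>b<n. hessian0 F a b = (if a = b then \<mu> else 0)"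
  shows "hat n sc F = escale \<mu> (Selt n)"
proof -
  have "hat n sc F = (\<Sum>a<n. \<Sum>b<n. if a = b then escale \<mu> (emul (xg a) (yg n b)) else 0)"
    unfolding hat_def
  proof (intro sum.cong refl)
    fix a b assume ab: "a \<in> {..<n}" "b \<in> {..<n}"
    have "mp_homog 0 (mp_pderiv a (mp_pderiv b F))"
      using mp_homog_pderiv[OF mp_homog_pderiv[OF hom]] by simp
    then have "keys (mp_pderiv a (mp_pderiv b F)) \<subseteq> {0}"
      using mp_homog_keys mdeg_eq_0_iff by blast
    then have eval: "ext_eval (mp_pderiv a (mp_pderiv b F)) (brc n sc xg (yg n)) =
        escale (if a = b then \<mu> else 0) eone"
      using ext_eval_const H ab by (simp add: hessian0_def)
    show "emul (emul (ext_eval (mp_pderiv a (mp_pderiv b F)) (brc n sc xg (yg n))) (xg a)) (yg n b) =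
        (if a = b then escale \<mu> (emul (xg a) (yg n b)) else 0)"
    proof -
      have "emul eone (xg a) = xg a" using ab by (intro emul_eone_left[of _ n] ext_carrier_xg) simp
      then show ?thesis by (simp add: eval emul_escale_left escale_zero_left emul_zero_left)
    qed
  qed
  also have "\<dots> = escale \<mu> (Selt n)"
    by (simp add: Selt_def escale_sum)
  finally show ?thesis .
qed

lemma hat_quadratic_invariant:
  assumes g: "simple_lie_onb n sc" and F: "inv_poly n sc F" "mp_homog 2 F" "F \<noteq> 0"
  obtains \<mu> where "\<mu> \<noteq> 0" "hat n sc F = escale \<mu> (Selt n)"
proof -
  obtain \<mu> where H: "\<forall>a<n. \<forall>b<n. hessian0 F a b = (if a = b then \<mu> else 0)"
    using inv_poly_hessian0_scalar[OF g F(1)] by blast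
  have "mp_vars_below n F" using F(1) by (simp add: inv_poly_def)
  then have "\<mu> \<noteq> 0" using quadratic_hessian0_nonzero F(2,3) H by blast
  then show ?thesis using that hat_quadratic[OF F(2) H] by blast
qed

lemma hat_higher_generator_in_ideal_I:
  fixes p :: "nat \<Rightarrow> mpoly"
  assumes g: "simple_lie_onb n sc"
    and p_inv: "\<forall>i<r. inv_poly n sc (p i) \<and> mp_homog (d i) (p i) \<and> p i \<noteq> 0"
    and p_indep: "\<forall>G. mp_vars_below r G \<and> mp_subst G p = 0 \<longrightarrow> G = 0"
    and d0: "d 0 = 2" and d_mono: "\<forall>i j. i \<le> j \<and> j < r \<longrightarrow> d i \<le> d j"
    and i: "0 < i" "i < r"
  shows "hat n sc (p i) \<in> ideal_I n sc"
proof -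
  have "d i \<noteq> 2" using quadratic_generator_unique[OF g p_inv p_indep, of 0 i] i d0 by auto
  moreover have "2 \<le> d i" using d_mono d0 i by force
  ultimately show ?thesis using p_inv i by (intro hat_in_ideal_I[of "d i"]) (auto simp: inv_poly_def)
qed

theorem proposition2p9:
  fixes n r :: nat and sc :: "nat \<Rightarrow> nat \<Rightarrow> nat \<Rightarrow> complex"
    and p :: "nat \<Rightarrow> mpoly" and d :: "nat \<Rightarrow> nat" and f :: mpoly
  assumes g: "simple_lie_onb n sc"
    and r: "1 \<le> r"
    and p_inv: "\<forall>i<r. inv_poly n sc (p i) \<and> mp_homog (d i) (p i) \<and> p i \<noteq> 0"
    and d1: "d 0 = 2"
    and d_mono: "\<forall>i j. i \<le> j \<and> j < r \<longrightarrow> d i \<le> d j"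
    and p_gen: "\<forall>F. inv_poly n sc F \<longrightarrow> (\<exists>G. mp_vars_below r G \<and> F = mp_subst G p)"
    and p_indep: "\<forall>G. mp_vars_below r G \<and> mp_subst G p = 0 \<longrightarrow> G = 0"
    and f_vars: "mp_vars_below r f"
    and f_hom: "mp_whomog (\<lambda>i. d i - 1) (dual_coxeter n sc) f"
    and f_zero: "ext_eval f (\<lambda>i. hat n sc (p i)) \<in> ideal_J n sc"
    and f_coeff: "Poly_Mapping.lookup f (Poly_Mapping.single 0 (dual_coxeter n sc)) \<noteq> 0"
  shows "epow (Selt n) (dual_coxeter n sc) \<in> ideal_I n sc"
proof -
  let ?h = "dual_coxeter n sc" and ?w = "\<lambda>i. hat n sc (p i)"
  let ?c = "lookup f (single 0 ?h)"
  have "inv_poly n sc (p 0)" "mp_homog 2 (p 0)" "p 0 \<noteq> 0" using p_inv r d1 by auto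
  then obtain \<mu> where "\<mu> \<noteq> 0" and hat0: "?w 0 = escale \<mu> (Selt n)"
    by (rule hat_quadratic_invariant[OF g])
  have "?w i \<in> ideal_I n sc" if "i \<in> keys m" "m \<in> keys f" "i \<noteq> 0" for i m
  proof -
    have "0 < i" "i < r" using that mp_vars_below_keys[OF f_vars] by auto
    then show ?thesis by (rule hat_higher_generator_in_ideal_I[OF g p_inv p_indep d1 d_mono])
  qed
  then have "\<forall>m\<in>keys f. m \<noteq> single 0 ?h \<longrightarrow> (\<exists>i\<in>keys m. ?w i \<in> ideal_I n sc)"
    using mp_whomog_key_other_var[OF f_hom d1] by blast
  then have "escale ?c (epow (?w 0) ?h) \<in> ideal_I n sc"
    using f_zero ideal_J_subset_ideal_I unfolding ideal_I_def
    by (intro ext_ideal_ext_eval_leading_term) (auto simp: ext_carrier_hat)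
  then have "escale (?c * \<mu> ^ ?h) (epow (Selt n) ?h) \<in> ideal_I n sc"
    by (simp add: hat0 epow_escale escale_escale)
  then show ?thesis
    using f_coeff \<open>\<mu> \<noteq> 0\<close> unfolding ideal_I_def by (simp add: ext_ideal_escale_iff)
qed

end
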